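(* Let $S$ be a finitely generated completely simple semigroup with maximal subgroups isomorphic to a group $G$. Let $\tau : Y^+ \to S$ be a finite semigroup choice of generators for $S$ and $\sigma : X^* \to G$ a finite monoid choice of generators for $G$, and let $W = \{u \in X^* : u\sigma = 1\}$ be the word problem of $G$. Then there is a rational transduction $\rho \subseteq X^* \times \hat{Y}^*$ such that $L_\tau(S)$ is the Kleene closure $(W\rho)^*$.
   Context: Maps are written on the right. $X^*$, $X^+$: free monoid and free semigroup on $X$. A semigroup is completely simple if it has no proper ideals and has a primitive idempotent (idempotent $e$ such that every idempotent $f$ with $ef = fe = f$ equals $e$); maximal subgroups are subsemigroups that are groups under the inherited multiplication and contained in no larger such. For a monoid $M$ and surjective morphism $\sigma : Y^* \to M$, let $\overline{Y} = \{\overline{y} : y \in Y\}$ be new symbols, $\hat{Y} = Y \cup \overline{Y}$; the loop automaton has vertex set $M$, for each $a \in M$, $y \in Y$ an edge $a \to a(y\sigma)$ labelled $y$ and an edge $a(y\sigma) \to a$ labelled $\overline{y}$; the loop problem is the set of labels of paths from the identity to the identity. For a semigroup $S$ and surjective $\tau : Y^+ \to S$, $L_\tau(S)$ is the loop problem of $S^1$ ($S$ with a new identity adjoined even if one exists) with respect to the extension $\tau^1 : Y^* \to S^1$. A finite transducer from $X$ to $Z$ is a finite directed graph with edges labelled by elements of $X^* \times Z^*$, an initial vertex and terminal vertices; the relation it accepts is the set of labels (componentwise concatenations) of paths from initial to terminal vertices; such relations are rational transductions. For $\rho \subseteq X^* \times Z^*$ and $L \subseteq X^*$, $L\rho = \{v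 : (u,v) \in \rho \text{ for some } u \in L\}$. The Kleene closure $K^*$ of a language $K$ is the submonoid of the free monoid generated by $K$. *)

theory Defs
  imports "HOL-Algebra.Group"
begin

section \<open>Semigroups (as HOL-Algebra structures whose one-field is ignored)\<close>

definition is_semigroup :: "('s, 'e) monoid_scheme \<Rightarrow> bool" where
  "is_semigroup S \<longleftrightarrow>
     (\<forall>x\<in>carrier S. \<forall>y\<in>carrier S. x \<otimes>\<^bsub>S\<^esub> y \<in> carrier S) \<and>
     (\<forall>x\<in>carrier S. \<forall>y\<in>carrier S. \<forall>z\<in>carrier S.
        (x \<otimes>\<^bsub>S\<^esub> y) \<otimes>\<^bsub>S\<^esub> z = x \<otimes>\<^bsub>S\<^esub> (y \<otimes>\<^bsub>S\<^esub> z))"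

definition sg_ideal :: "('s, 'e) monoid_scheme \<Rightarrow> 's set \<Rightarrow> bool" where
  "sg_ideal S I \<longleftrightarrow> I \<noteq> {} \<and> I \<subseteq> carrier S \<and>
     (\<forall>s\<in>carrier S. \<forall>i\<in>I. s \<otimes>\<^bsub>S\<^esub> i \<in> I \<and> i \<otimes>\<^bsub>S\<^esub> s \<in> I)"

definition primitive_idempotent :: "('s, 'e) monoid_scheme \<Rightarrow> 's \<Rightarrow> bool" where
  "primitive_idempotent S e \<longleftrightarrow> e \<in> carrier S \<and> e \<otimes>\<^bsub>S\<^esub> e = e \<and>
     (\<forall>f\<in>carrier S. f \<otimes>\<^bsub>S\<^esub> f = f \<and> e \<otimes>\<^bsub>S\<^esub> f = f \<and> f \<otimes>\<^bsub>S\<^esub> e = f \<longrightarrow> f = e)"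

definition completely_simple :: "('s, 'e) monoid_scheme \<Rightarrow> bool" where
  "completely_simple S \<longleftrightarrow> is_semigroup S \<and> carrier S \<noteq> {} \<and>
     (\<forall>I. sg_ideal S I \<longrightarrow> I = carrier S) \<and>
     (\<exists>e. primitive_idempotent S e)"

definition sub_struct :: "('s, 'e) monoid_scheme \<Rightarrow> 's set \<Rightarrow> 's \<Rightarrow> 's monoid" where
  "sub_struct S H e = \<lparr>carrier = H, mult = mult S, one = e\<rparr>"

definition subgroup_of_sg :: "('s, 'e) monoid_scheme \<Rightarrow> 's set \<Rightarrow> bool" where
  "subgroup_of_sg S H \<longleftrightarrow> H \<subseteq> carrier S \<and> (\<exists>e. group (sub_struct S H e))"

definition maximal_subgroup :: "('s, 'e) monoid_scheme \<Rightarrow> 's set \<Rightarrow> bool" where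
  "maximal_subgroup S H \<longleftrightarrow> subgroup_of_sg S H \<and>
     (\<forall>K. subgroup_of_sg S K \<and> H \<subseteq> K \<longrightarrow> K = H)"

definition finitely_generated_sg :: "('s, 'e) monoid_scheme \<Rightarrow> bool" where
  "finitely_generated_sg S \<longleftrightarrow> (\<exists>A. finite A \<and> A \<subseteq> carrier S \<and>
     (\<forall>s\<in>carrier S. \<exists>w\<in>lists A. w \<noteq> [] \<and>
        foldl (\<lambda>x y. x \<otimes>\<^bsub>S\<^esub> y) (hd w) (tl w) = s))"

text \<open>The semigroup morphism \<open>Y\<^sup>+ \<rightarrow> S\<close> extending the letter map \<open>t\<close>
  (only meaningful on nonempty words).\<close>
definition sg_eval :: "('s, 'e) monoid_scheme \<Rightarrow> ('y \<Rightarrow> 's) \<Rightarrow> 'y list \<Rightarrow> 's" where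
  "sg_eval S t w = foldl (\<lambda>x y. x \<otimes>\<^bsub>S\<^esub> t y) (t (hd w)) (tl w)"

definition mon_eval :: "('g, 'b) monoid_scheme \<Rightarrow> ('x \<Rightarrow> 'g) \<Rightarrow> 'x list \<Rightarrow> 'g" where
  "mon_eval G s u = foldr (\<lambda>x a. s x \<otimes>\<^bsub>G\<^esub> a) u \<one>\<^bsub>G\<^esub>"

definition sg_gen_choice :: "('s, 'e) monoid_scheme \<Rightarrow> 'y set \<Rightarrow> ('y \<Rightarrow> 's) \<Rightarrow> bool" where
  "sg_gen_choice S Y t \<longleftrightarrow> finite Y \<and> t ` Y \<subseteq> carrier S \<and>
     (\<forall>x\<in>carrier S. \<exists>w\<in>lists Y. w \<noteq> [] \<and> sg_eval S t w = x)"

definition mon_gen_choice :: "('g, 'b) monoid_scheme \<Rightarrow> 'x set \<Rightarrow> ('x \<Rightarrow> 'g) \<Rightarrow> bool" where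
  "mon_gen_choice G X s \<longleftrightarrow> finite X \<and> s ` X \<subseteq> carrier G \<and>
     (\<forall>g\<in>carrier G. \<exists>u\<in>lists X. mon_eval G s u = g)"

definition word_problem :: "('g, 'b) monoid_scheme \<Rightarrow> 'x set \<Rightarrow> ('x \<Rightarrow> 'g) \<Rightarrow> 'x list set" where
  "word_problem G X s = {u \<in> lists X. mon_eval G s u = \<one>\<^bsub>G\<^esub>}"

datatype 'y hat = Pos 'y | Bar 'y

definition hat_alph :: "'y set \<Rightarrow> 'y hat set" where
  "hat_alph Y = Pos ` Y \<union> Bar ` Y"

text \<open>Paths in the loop automaton of a monoid (carrier \<open>M\<close>, multiplication \<open>mul\<close>)
  with generator images \<open>gen y\<close> (\<open>y \<in> Y\<close>): edge \<open>a \<rightarrow> a(y\<sigma>)\<close> labelled \<open>y\<close>,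
  edge \<open>a(y\<sigma>) \<rightarrow> a\<close> labelled \<open>\<overline>y\<close>.\<close>
inductive loop_path :: "'m set \<Rightarrow> ('m \<Rightarrow> 'm \<Rightarrow> 'm) \<Rightarrow> 'y set \<Rightarrow> ('y \<Rightarrow> 'm)
    \<Rightarrow> 'm \<Rightarrow> 'y hat list \<Rightarrow> 'm \<Rightarrow> bool"
  for M mul Y gen where
  lp_nil: "a \<in> M \<Longrightarrow> loop_path M mul Y gen a [] a"
| lp_pos: "a \<in> M \<Longrightarrow> y \<in> Y \<Longrightarrow> loop_path M mul Y gen (mul a (gen y)) w b
            \<Longrightarrow> loop_path M mul Y gen a (Pos y # w) b"
| lp_bar: "a \<in> M \<Longrightarrow> y \<in> Y \<Longrightarrow> loop_path M mul Y gen a w b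
            \<Longrightarrow> loop_path M mul Y gen (mul a (gen y)) (Bar y # w) b"

definition loop_problem :: "'m set \<Rightarrow> ('m \<Rightarrow> 'm \<Rightarrow> 'm) \<Rightarrow> 'm \<Rightarrow> 'y set \<Rightarrow> ('y \<Rightarrow> 'm)
    \<Rightarrow> 'y hat list set" where
  "loop_problem M mul e Y gen = {w. loop_path M mul Y gen e w e}"

text \<open>\<open>S\<^sup>1\<close>: \<open>S\<close> with a new identity \<open>None\<close> adjoined.\<close>
fun mult1 :: "('s, 'e) monoid_scheme \<Rightarrow> 's option \<Rightarrow> 's option \<Rightarrow> 's option" where
  "mult1 S None b = b"
| "mult1 S (Some a) None = Some a"
| "mult1 S (Some a) (Some b) = Some (a \<otimes>\<^bsub>S\<^esub> b)"

definition carrier1 :: "('s, 'e) monoid_scheme \<Rightarrow> 's option set" where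
  "carrier1 S = insert None (Some ` carrier S)"

definition L_tau :: "('s, 'e) monoid_scheme \<Rightarrow> 'y set \<Rightarrow> ('y \<Rightarrow> 's) \<Rightarrow> 'y hat list set" where
  "L_tau S Y t = loop_problem (carrier1 S) (mult1 S) None Y (\<lambda>y. Some (t y))"

text \<open>Edges are \<open>(p, u, v, q)\<close>: from \<open>p\<close> to \<open>q\<close> labelled \<open>(u,v)\<close>.\<close>
inductive trans_run :: "(nat \<times> 'x list \<times> 'z list \<times> nat) set
    \<Rightarrow> nat \<Rightarrow> 'x list \<Rightarrow> 'z list \<Rightarrow> nat \<Rightarrow> bool" for E where
  tr_nil: "trans_run E p [] [] p"
| tr_step: "(p, u, v, q) \<in> E \<Longrightarrow> trans_run E q u' v' r \<Longrightarrow> trans_run E p (u @ u') (v @ v') r"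

definition rational_transduction :: "'x set \<Rightarrow> 'z set \<Rightarrow> ('x list \<times> 'z list) set \<Rightarrow> bool" where
  "rational_transduction X Z \<rho> \<longleftrightarrow>
     (\<exists>(Q :: nat set) E q0 F. finite Q \<and> finite E \<and> q0 \<in> Q \<and> F \<subseteq> Q \<and>
        (\<forall>(p, u, v, q) \<in> E. p \<in> Q \<and> q \<in> Q \<and> u \<in> lists X \<and> v \<in> lists Z) \<and>
        \<rho> = {(u, v). \<exists>f\<in>F. trans_run E q0 u v f})"

definition rel_image :: "'x list set \<Rightarrow> ('x list \<times> 'z list) set \<Rightarrow> 'z list set" where
  "rel_image L \<rho> = {v. \<exists>u\<in>L. (u, v) \<in> \<rho>}"

definition kleene :: "'z list set \<Rightarrow> 'z list set" where
  "kleene K = {concat ws | ws. set ws \<subseteq> K}"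

end

theory Submission
  imports Defs
begin

text \<open>
  Fix a primitive idempotent \<open>e\<close> of the completely simple semigroup \<open>S\<close>; then \<open>H\<^sub>e = eSe\<close>
  is a maximal subgroup, so \<open>H\<^sub>e \<cong> G\<close>. An element \<open>x\<close> of \<open>S\<close> is determined by its \<open>\<R>\<close>-class,
  its \<open>\<L>\<close>-class and its Rees coordinate \<open>exe \<in> H\<^sub>e\<close>, and right multiplication by a
  fixed element multiplies the coordinate of \<open>x\<close> by an element of \<open>H\<^sub>e\<close> that depends only on
  the \<open>\<L>\<close>-class of \<open>x\<close>.

  A loop at the adjoined identity of \<open>S\<^sup>1\<close> is a product of primitive loops, which return to
  the identity only at their end. Along a primitive loop starting with the letter \<open>y\<^sub>0\<close> the
  \<open>\<R>\<close>-class stays that of \<open>y\<^sub>0\<tau>\<close>, and the \<open>\<L>\<close>-class is that of some generator. Hence a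
  transducer whose states are pairs of generators can follow a primitive loop while its input
  spells, over \<open>X\<close>, the coordinate changes in \<open>G\<close>; the loop closes exactly when the whole
  input represents \<open>1\<close>, i.e. lies in the word problem \<open>W\<close>.
\<close>

section \<open>Completely simple semigroups\<close>

lemma sub_struct_simps [simp]:
  "carrier (sub_struct S H e) = H" "mult (sub_struct S H e) = mult S" "one (sub_struct S H e) = e"
  by (simp_all add: sub_struct_def)

locale cs_semigroup =
  fixes S :: "('s, 'e) monoid_scheme" (structure) and e :: 's
  assumes closed [intro, simp]: "x \<in> carrier S \<Longrightarrow> y \<in> carrier S \<Longrightarrow> x \<otimes> y \<in> carrier S"
    and assoc: "x \<in> carrier S \<Longrightarrow> y \<in> carrier S \<Longrightarrow> z \<in> carrier S \<Longrightarrow> (x \<otimes> y) \<otimes> z = x \<otimes> (y \<otimes> z)"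
    and simple: "a \<in> carrier S \<Longrightarrow> b \<in> carrier S \<Longrightarrow> \<exists>x\<in>carrier S. \<exists>y\<in>carrier S. a = x \<otimes> b \<otimes> y"
    and e_closed [simp]: "e \<in> carrier S"
    and e_idem [simp]: "e \<otimes> e = e"
    and e_primitive: "f \<in> carrier S \<Longrightarrow> f \<otimes> f = f \<Longrightarrow> e \<otimes> f = f \<Longrightarrow> f \<otimes> e = f \<Longrightarrow> f = e"

lemma completely_simple_imp_cs_semigroup:
  assumes "completely_simple S"
  obtains e where "cs_semigroup S e"
proof -
  have sg: "is_semigroup S" and ne: "carrier S \<noteq> {}"
    and ideal: "\<And>I. sg_ideal S I \<Longrightarrow> I = carrier S"
    and prim: "\<exists>e. primitive_idempotent S e"
    using assms unfolding completely_simple_def by auto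
  note closed = sg[unfolded is_semigroup_def, THEN conjunct1, rule_format]
  note assoc = sg[unfolded is_semigroup_def, THEN conjunct2, rule_format]
  have "\<exists>x\<in>carrier S. \<exists>y\<in>carrier S. a = x \<otimes>\<^bsub>S\<^esub> b \<otimes>\<^bsub>S\<^esub> y"
    if a: "a \<in> carrier S" and b: "b \<in> carrier S" for a b
  proof -
    define I where "I = {x \<otimes>\<^bsub>S\<^esub> b \<otimes>\<^bsub>S\<^esub> y | x y. x \<in> carrier S \<and> y \<in> carrier S}"
    have "sg_ideal S I"
      unfolding sg_ideal_def
    proof (intro conjI ballI)
      show "I \<noteq> {}" "I \<subseteq> carrier S" using ne b closed unfolding I_def by blast+
    next
      fix z i assume z: "z \<in> carrier S" and "i \<in> I"
      then obtain x y where xy: "x \<in> carrier S" "y \<in> carrier S" "i = x \<otimes>\<^bsub>S\<^esub> b \<otimes>\<^bsub>S\<^esub> y"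
        unfolding I_def by blast
      have "z \<otimes>\<^bsub>S\<^esub> i = (z \<otimes>\<^bsub>S\<^esub> x) \<otimes>\<^bsub>S\<^esub> b \<otimes>\<^bsub>S\<^esub> y"
        and "i \<otimes>\<^bsub>S\<^esub> z = x \<otimes>\<^bsub>S\<^esub> b \<otimes>\<^bsub>S\<^esub> (y \<otimes>\<^bsub>S\<^esub> z)"
        using xy z b closed assoc by simp_all
      then show "z \<otimes>\<^bsub>S\<^esub> i \<in> I" "i \<otimes>\<^bsub>S\<^esub> z \<in> I" using xy z closed unfolding I_def by blast+
    qed
    with ideal a show ?thesis unfolding I_def by blast
  qed
  moreover obtain e where "primitive_idempotent S e"
    using prim by blast
  ultimately have "cs_semigroup S e"
    using closed assoc unfolding cs_semigroup_def primitive_idempotent_def by blast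
  then show ?thesis by (rule that)
qed

context cs_semigroup
begin

lemma e_left_idem [simp]: "z \<in> carrier S \<Longrightarrow> e \<otimes> (e \<otimes> z) = e \<otimes> z"
  by (metis assoc e_closed e_idem)

lemma opposite: "cs_semigroup (S\<lparr>mult := \<lambda>x y. y \<otimes> x\<rparr>) e"
proof -
  have "\<exists>x\<in>carrier S. \<exists>y\<in>carrier S. a = y \<otimes> (b \<otimes> x)"
    if ab: "a \<in> carrier S" "b \<in> carrier S" for a b
  proof -
    obtain x y where "x \<in> carrier S" "y \<in> carrier S" "a = x \<otimes> b \<otimes> y"
      using simple[OF ab] by blast
    then show ?thesis using ab(2) by (metis assoc)
  qed
  then show ?thesis
    unfolding cs_semigroup_def by (auto simp: assoc intro: e_primitive)
qed

lemma ex_left_mult_eq_e: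
  assumes w: "w \<in> carrier S" shows "\<exists>u\<in>carrier S. u \<otimes> (w \<otimes> e) = e"
proof -
  obtain x y where x: "x \<in> carrier S" and y: "y \<in> carrier S" and xy: "e = x \<otimes> (w \<otimes> e) \<otimes> y"
    using simple[of e "w \<otimes> e"] w by auto
  have xy': "x \<otimes> (w \<otimes> (e \<otimes> (y \<otimes> z))) = e \<otimes> z" if "z \<in> carrier S" for z
    using xy x y w that by (metis assoc closed e_closed)
  define f where "f = e \<otimes> (y \<otimes> (e \<otimes> (x \<otimes> (w \<otimes> e))))"
  \<comment> \<open>\<open>f\<close> is an idempotent below \<open>e\<close>, hence equal to \<open>e\<close> by primitivity.\<close>
  have "f = e"
    using x y w by (intro e_primitive) (simp_all add: f_def assoc xy')
  then show ?thesis
    using x y w by (intro bexI[of _ "e \<otimes> (y \<otimes> (e \<otimes> x))"]) (auto simp: f_def assoc)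
qed

lemma left_mult_undo:
  assumes a: "a \<in> carrier S" and z: "z \<in> carrier S"
  shows "\<exists>u\<in>carrier S. u \<otimes> (z \<otimes> a) = a"
proof -
  obtain x y where x: "x \<in> carrier S" and y: "y \<in> carrier S" and xy: "a = x \<otimes> e \<otimes> y"
    using simple[OF a e_closed] by blast
  obtain v where v: "v \<in> carrier S" "v \<otimes> (z \<otimes> x \<otimes> e) = e"
    using ex_left_mult_eq_e[of "z \<otimes> x"] z x by blast
  have "x \<otimes> v \<otimes> (z \<otimes> a) = x \<otimes> (v \<otimes> (z \<otimes> x \<otimes> e) \<otimes> y)"
    using x y z v(1) by (simp add: xy assoc)
  also have "\<dots> = a"
    using x y by (simp add: v(2) xy assoc)
  finally show ?thesis
    using x v(1) by blast
qed

text \<open>In a completely simple semigroup these one-sided divisibility relations are already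
  Green's equivalences \<open>\<L>\<close> and \<open>\<R>\<close>.\<close>

definition green_L :: "'s \<Rightarrow> 's \<Rightarrow> bool" where
  "green_L a b \<longleftrightarrow> (\<exists>w\<in>carrier S. a = w \<otimes> b)"

definition green_R :: "'s \<Rightarrow> 's \<Rightarrow> bool" where
  "green_R a b \<longleftrightarrow> (\<exists>w\<in>carrier S. a = b \<otimes> w)"

lemma green_L_opposite: "cs_semigroup.green_L (S\<lparr>mult := \<lambda>x y. y \<otimes> x\<rparr>) = green_R"
  by (simp add: fun_eq_iff cs_semigroup.green_L_def[OF opposite] green_R_def)

lemma green_R_opposite: "cs_semigroup.green_R (S\<lparr>mult := \<lambda>x y. y \<otimes> x\<rparr>) = green_L"
  by (simp add: fun_eq_iff cs_semigroup.green_R_def[OF opposite] green_L_def)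

lemma green_L_mult: "a \<in> carrier S \<Longrightarrow> green_L (a \<otimes> b) b"
  unfolding green_L_def by blast

lemma green_L_sym:
  assumes "a \<in> carrier S" "b \<in> carrier S" "green_L a b" shows "green_L b a"
proof -
  obtain w where "w \<in> carrier S" "a = w \<otimes> b"
    using assms(3) unfolding green_L_def by blast
  then show ?thesis
    using left_mult_undo[OF assms(2), of w] unfolding green_L_def by metis
qed

lemma green_L_refl: "a \<in> carrier S \<Longrightarrow> green_L a a"
  using left_mult_undo[of a a] unfolding green_L_def by (metis assoc closed)

lemma green_L_trans:
  assumes "c \<in> carrier S" "green_L a b" "green_L b c" shows "green_L a c"
proof -
  obtain v w where "v \<in> carrier S" "a = v \<otimes> b" "w \<in> carrier S" "b = w \<otimes> c"
    using assms(2,3) unfolding green_L_def by blast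
  then show ?thesis
    using assms(1) unfolding green_L_def by (metis assoc closed)
qed

lemma green_R_mult: "b \<in> carrier S \<Longrightarrow> green_R (a \<otimes> b) a"
  using cs_semigroup.green_L_mult[OF opposite] by (simp add: green_L_opposite)

lemma green_R_sym: "a \<in> carrier S \<Longrightarrow> b \<in> carrier S \<Longrightarrow> green_R a b \<Longrightarrow> green_R b a"
  using cs_semigroup.green_L_sym[OF opposite] by (simp add: green_L_opposite)

lemma green_R_refl: "a \<in> carrier S \<Longrightarrow> green_R a a"
  using cs_semigroup.green_L_refl[OF opposite] by (simp add: green_L_opposite)

lemma green_R_trans: "c \<in> carrier S \<Longrightarrow> green_R a b \<Longrightarrow> green_R b c \<Longrightarrow> green_R a c"
  using cs_semigroup.green_L_trans[OF opposite] by (simp add: green_L_opposite)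

lemma green_R_eqI:
  assumes a: "a \<in> carrier S" and "green_R b a" and ea: "e \<otimes> a = e \<otimes> b"
  shows "a = b"
proof -
  obtain w where w: "w \<in> carrier S" "b = a \<otimes> w"
    using \<open>green_R b a\<close> unfolding green_R_def by blast
  obtain u where u: "u \<in> carrier S" "u \<otimes> (e \<otimes> a) = a"
    using left_mult_undo[OF a e_closed] by blast
  have "a = u \<otimes> (e \<otimes> b)"
    using u(2) ea by simp
  also have "\<dots> = u \<otimes> (e \<otimes> a) \<otimes> w"
    using a u(1) w by (simp add: assoc)
  also have "\<dots> = b"
    using u(2) w(2) by simp
  finally show ?thesis .
qed

lemma green_L_eqI: "a \<in> carrier S \<Longrightarrow> green_L b a \<Longrightarrow> a \<otimes> e = b \<otimes> e \<Longrightarrow> a = b"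
  using cs_semigroup.green_R_eqI[OF opposite] by (simp add: green_R_opposite)

definition H_e :: "'s set" where
  "H_e = (\<lambda>x. e \<otimes> x \<otimes> e) ` carrier S"

lemma H_eI [simp]: "x \<in> carrier S \<Longrightarrow> e \<otimes> x \<otimes> e \<in> H_e"
  unfolding H_e_def by blast

lemma H_eD:
  assumes "h \<in> H_e" shows "h \<in> carrier S" "e \<otimes> h = h" "h \<otimes> e = h"
  using assms unfolding H_e_def by (auto simp: assoc)

lemma H_e_closed [simp]: "h \<in> H_e \<Longrightarrow> h \<in> carrier S"
  and H_e_left_e [simp]: "h \<in> H_e \<Longrightarrow> e \<otimes> h = h"
  and H_e_right_e [simp]: "h \<in> H_e \<Longrightarrow> h \<otimes> e = h"
  by (simp_all add: H_eD)

lemma H_e_left_e_assoc [simp]: "h \<in> H_e \<Longrightarrow> z \<in> carrier S \<Longrightarrow> e \<otimes> (h \<otimes> z) = h \<otimes> z"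
  and H_e_right_e_assoc [simp]: "h \<in> H_e \<Longrightarrow> z \<in> carrier S \<Longrightarrow> h \<otimes> (e \<otimes> z) = h \<otimes> z"
  by (metis H_eD assoc e_closed)+

lemma H_e_mult: "g \<in> H_e \<Longrightarrow> h \<in> H_e \<Longrightarrow> g \<otimes> h \<in> H_e"
  using H_eI[of "g \<otimes> h"] by (metis H_eD assoc closed e_closed)

lemma e_in_H_e [simp]: "e \<in> H_e"
  using H_eI[OF e_closed] by simp

lemma group_H_e: "group (sub_struct S H_e e)"
proof (rule groupI)
  show "\<And>x y. x \<in> carrier (sub_struct S H_e e) \<Longrightarrow> y \<in> carrier (sub_struct S H_e e) \<Longrightarrow>
    x \<otimes>\<^bsub>sub_struct S H_e e\<^esub> y \<in> carrier (sub_struct S H_e e)"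
    by (simp add: H_e_mult)
next
  fix h assume "h \<in> carrier (sub_struct S H_e e)"
  then have h: "h \<in> H_e" by simp
  obtain u where u: "u \<in> carrier S" "u \<otimes> (h \<otimes> e) = e"
    using ex_left_mult_eq_e[of h] h by auto
  have "e \<otimes> u \<otimes> e \<otimes> h = e \<otimes> (u \<otimes> (h \<otimes> e))"
    using h u(1) by (metis H_eD assoc closed e_closed)
  then have "e \<otimes> u \<otimes> e \<otimes> h = e"
    by (simp add: u(2))
  then show "\<exists>g\<in>carrier (sub_struct S H_e e). g \<otimes>\<^bsub>sub_struct S H_e e\<^esub> h = \<one>\<^bsub>sub_struct S H_e e\<^esub>"
    using u(1) by auto
qed (auto simp: assoc)

sublocale H: group "sub_struct S H_e e"
  by (rule group_H_e)

abbreviation inv_e :: "'s \<Rightarrow> 's" where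
  "inv_e \<equiv> m_inv (sub_struct S H_e e)"

lemma inv_e_closed [simp]: "h \<in> H_e \<Longrightarrow> inv_e h \<in> H_e"
  and inv_e_left [simp]: "h \<in> H_e \<Longrightarrow> inv_e h \<otimes> h = e"
  and inv_e_right [simp]: "h \<in> H_e \<Longrightarrow> h \<otimes> inv_e h = e"
  using H.inv_closed H.l_inv H.r_inv by simp_all

lemma inv_e_left_assoc [simp]: "h \<in> H_e \<Longrightarrow> z \<in> carrier S \<Longrightarrow> inv_e h \<otimes> (h \<otimes> z) = e \<otimes> z"
  and inv_e_right_assoc [simp]: "h \<in> H_e \<Longrightarrow> z \<in> carrier S \<Longrightarrow> h \<otimes> (inv_e h \<otimes> z) = e \<otimes> z"
  by (simp_all flip: assoc)

text \<open>For right-normalising products by \<open>simp only\<close>: with the full simpset, the carrier side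
  conditions of \<open>assoc\<close> make simplification blow up.\<close>

lemmas assoc_simps = assoc closed e_closed e_idem e_left_idem H_e_closed H_e_left_e H_e_right_e
  H_e_left_e_assoc H_e_right_e_assoc inv_e_closed inv_e_left inv_e_right inv_e_left_assoc inv_e_right_assoc

lemma maximal_subgroup_H_e: "maximal_subgroup S H_e"
  unfolding maximal_subgroup_def
proof (intro conjI allI impI)
  show "subgroup_of_sg S H_e"
    unfolding subgroup_of_sg_def using group_H_e by auto
next
  fix K assume K: "subgroup_of_sg S K \<and> H_e \<subseteq> K"
  then obtain f where K_sub: "K \<subseteq> carrier S" and K_group: "group (sub_struct S K f)"
    unfolding subgroup_of_sg_def by blast
  interpret K: group "sub_struct S K f" by (rule K_group)
  have "e \<in> K" using K by auto
  \<comment> \<open>\<open>e\<close> is an idempotent of the group \<open>K\<close>, hence its identity.\<close>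
  then have "e = f"
    using K.l_cancel_one[of e e] by simp
  have "k \<in> H_e" if "k \<in> K" for k
    using H_eI[of k] K.l_one[of k] K.r_one[of k] that K_sub \<open>e = f\<close> by auto
  then show "K = H_e" using K by blast
qed

definition H_class :: "'s \<Rightarrow> 's \<Rightarrow> 's set" where
  "H_class a b = {x \<in> carrier S. green_R x a \<and> green_L x b}"

lemma H_classD:
  assumes "x \<in> H_class a b" shows "x \<in> carrier S" "green_R x a" "green_L x b"
  using assms unfolding H_class_def by auto

lemma H_class_refl: "a \<in> carrier S \<Longrightarrow> a \<in> H_class a a"
  unfolding H_class_def by (simp add: green_L_refl green_R_refl)

lemma H_class_mult:
  assumes "a \<in> carrier S" "x \<in> H_class a b" "t \<in> carrier S"
  shows "x \<otimes> t \<in> H_class a t"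
  using assms green_R_trans[OF _ green_R_mult] green_L_mult unfolding H_class_def by blast

lemma mult_in_H_class:
  "a \<in> carrier S \<Longrightarrow> m \<in> carrier S \<Longrightarrow> b \<in> carrier S \<Longrightarrow> a \<otimes> (m \<otimes> b) \<in> H_class a b"
  unfolding H_class_def using green_R_mult green_L_mult[of "a \<otimes> m" b] by (simp add: assoc)

lemma H_class_green_L:
  "c \<in> carrier S \<Longrightarrow> green_L b c \<Longrightarrow> x \<in> H_class a b \<Longrightarrow> x \<in> H_class a c"
  unfolding H_class_def using green_L_trans by blast

text \<open>\<open>x \<mapsto> e x e\<close> maps every \<open>\<H>\<close>-class bijectively onto \<open>H_e\<close>: these are the Rees
  coordinates of \<open>S\<close>.\<close>

lemma sandwich_inj_on_H_class:
  assumes a: "a \<in> carrier S" and b: "b \<in> carrier S"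
    and x: "x \<in> H_class a b" and x': "x' \<in> H_class a b" and eq: "e \<otimes> x \<otimes> e = e \<otimes> x' \<otimes> e"
  shows "x = x'"
proof -
  have xR: "green_R x a" and xL: "green_L x b" and x'C: "x' \<in> carrier S"
    and x'R: "green_R x' a" and x'L: "green_L x' b"
    using x x' unfolding H_class_def by auto
  have R: "green_R x x'"
    using green_R_trans[OF x'C xR green_R_sym[OF x'C a x'R]] .
  have "green_L x x'"
    using green_L_trans[OF x'C xL green_L_sym[OF x'C b x'L]] .
  then obtain w where w: "w \<in> carrier S" "x = w \<otimes> x'"
    unfolding green_L_def by blast
  obtain u where u: "u \<in> carrier S" "u \<otimes> (e \<otimes> x') = x'"
    using left_mult_undo[OF x'C e_closed] by blast
  have "e \<otimes> x = e \<otimes> (w \<otimes> (u \<otimes> (e \<otimes> x')))"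
    by (simp only: w(2) u(2))
  also have "\<dots> = (e \<otimes> w \<otimes> u) \<otimes> (e \<otimes> x')"
    using w(1) u(1) x'C by (simp only: assoc closed e_closed)
  finally have "green_L (e \<otimes> x) (e \<otimes> x')"
    using w(1) u(1) unfolding green_L_def by (intro bexI[of _ "e \<otimes> w \<otimes> u"]) auto
  then have "e \<otimes> x' = e \<otimes> x"
    using green_L_eqI[of "e \<otimes> x'" "e \<otimes> x"] eq x'C by simp
  then show ?thesis
    using green_R_eqI[OF x'C R] by simp
qed

lemma sandwich_surj_on_H_class:
  assumes a: "a \<in> carrier S" and b: "b \<in> carrier S" and g: "g \<in> H_e"
  shows "\<exists>x\<in>H_class a b. e \<otimes> x \<otimes> e = g"
proof
  define h h' where "h = e \<otimes> a \<otimes> e" and "h' = e \<otimes> b \<otimes> e"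
  have hh': "h \<in> H_e" "h' \<in> H_e"
    using a b by (simp_all add: h_def h'_def)
  define m where "m = inv_e h \<otimes> g \<otimes> inv_e h'"
  have m: "m \<in> H_e"
    using hh' g by (simp add: m_def H_e_mult)
  show "a \<otimes> (m \<otimes> b) \<in> H_class a b"
    using a b m by (simp add: mult_in_H_class)
  have "e \<otimes> (a \<otimes> (m \<otimes> b)) \<otimes> e = h \<otimes> m \<otimes> h'"
    using a b m unfolding h_def h'_def by (simp only: assoc_simps)
  also have "\<dots> = g"
    using hh' g unfolding m_def by (simp only: assoc_simps)
  finally show "e \<otimes> (a \<otimes> (m \<otimes> b)) \<otimes> e = g" .
qed

lemma sandwich_factor:
  assumes a: "a \<in> carrier S" shows "a \<otimes> (inv_e (e \<otimes> a \<otimes> e) \<otimes> a) = a"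
proof (rule sandwich_inj_on_H_class[OF a a _ H_class_refl[OF a]])
  define k where "k = inv_e (e \<otimes> a \<otimes> e)"
  have k: "k \<in> H_e" using a by (simp add: k_def)
  show "a \<otimes> (k \<otimes> a) \<in> H_class a a"
    using a k by (simp add: mult_in_H_class)
  have "e \<otimes> (a \<otimes> (k \<otimes> a)) \<otimes> e = (e \<otimes> a \<otimes> e) \<otimes> k \<otimes> (e \<otimes> a \<otimes> e)"
    using a k by (simp only: assoc_simps)
  also have "\<dots> = e \<otimes> a \<otimes> e"
    using a unfolding k_def by (simp add: H.m_assoc[simplified])
  finally show "e \<otimes> (a \<otimes> (k \<otimes> a)) \<otimes> e = e \<otimes> a \<otimes> e" .
qed

definition sandwich_shift :: "'s \<Rightarrow> 's \<Rightarrow> 's" where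
  "sandwich_shift a t = inv_e (e \<otimes> a \<otimes> e) \<otimes> (e \<otimes> (a \<otimes> t) \<otimes> e)"

lemma sandwich_shift_closed [simp]: "a \<in> carrier S \<Longrightarrow> t \<in> carrier S \<Longrightarrow> sandwich_shift a t \<in> H_e"
  by (simp add: sandwich_shift_def H_e_mult)

text \<open>The change of coordinate under right multiplication depends only on the \<open>\<L>\<close>-class of
  \<open>x\<close>; this is what lets finitely many states keep track of it.\<close>

lemma sandwich_mult:
  assumes "x \<in> carrier S" "a \<in> carrier S" "t \<in> carrier S" "green_L x a"
  shows "e \<otimes> (x \<otimes> t) \<otimes> e = (e \<otimes> x \<otimes> e) \<otimes> sandwich_shift a t"
proof -
  define k where "k = inv_e (e \<otimes> a \<otimes> e)"
  have k: "k \<in> H_e" using assms(2) by (simp add: k_def)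
  obtain w where w: "w \<in> carrier S" "x = w \<otimes> a"
    using \<open>green_L x a\<close> unfolding green_L_def by blast
  have "e \<otimes> (x \<otimes> t) \<otimes> e = e \<otimes> (w \<otimes> (a \<otimes> (k \<otimes> a)) \<otimes> t) \<otimes> e"
    by (simp only: w(2) k_def sandwich_factor[OF assms(2)])
  also have "\<dots> = (e \<otimes> (w \<otimes> a) \<otimes> e) \<otimes> (k \<otimes> (e \<otimes> (a \<otimes> t) \<otimes> e))"
    using assms(2,3) w(1) k by (simp only: assoc_simps)
  finally show ?thesis
    by (simp only: w(2) sandwich_shift_def k_def)
qed

lemma right_quotient_in_H_class:
  assumes a: "a \<in> carrier S" and b': "b' \<in> carrier S" and t: "t \<in> carrier S"
    and "green_L b t" and x: "x \<in> H_class a b"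
  obtains x' where "x' \<in> H_class a b'" "x' \<otimes> t = x"
    "e \<otimes> x' \<otimes> e = (e \<otimes> x \<otimes> e) \<otimes> inv_e (sandwich_shift b' t)"
proof -
  define c where "c = sandwich_shift b' t"
  have c: "c \<in> H_e" and xC: "x \<in> carrier S"
    using b' t H_classD(1)[OF x] by (simp_all add: c_def)
  obtain x' where x': "x' \<in> H_class a b'" and x'_coord: "e \<otimes> x' \<otimes> e = e \<otimes> x \<otimes> e \<otimes> inv_e c"
    using sandwich_surj_on_H_class[OF a b', of "e \<otimes> x \<otimes> e \<otimes> inv_e c"] c xC by (auto simp: H_e_mult)
  have "x' \<otimes> t = x"
  proof (rule sandwich_inj_on_H_class[OF a t])
    show "x' \<otimes> t \<in> H_class a t"
      using H_class_mult[OF a x' t] .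
    show "x \<in> H_class a t"
      using H_class_green_L[OF t \<open>green_L b t\<close> x] .
    have "e \<otimes> (x' \<otimes> t) \<otimes> e = e \<otimes> x \<otimes> e \<otimes> inv_e c \<otimes> c"
      using sandwich_mult[OF H_classD(1)[OF x'] b' t H_classD(3)[OF x']] x'_coord by (simp add: c_def)
    also have "\<dots> = e \<otimes> x \<otimes> e"
      using xC c by (simp add: H.m_assoc[simplified])
    finally show "e \<otimes> (x' \<otimes> t) \<otimes> e = e \<otimes> x \<otimes> e" .
  qed
  then show ?thesis
    using that x' x'_coord unfolding c_def by blast
qed

end

section \<open>Words, Kleene closure and loop paths\<close>

lemma (in monoid) mon_eval_closed: "s ` set u \<subseteq> carrier G \<Longrightarrow> mon_eval G s u \<in> carrier G"
  by (induction u) (auto simp: mon_eval_def)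

lemma (in monoid) mon_eval_append:
  assumes "s ` set u \<subseteq> carrier G" "s ` set v \<subseteq> carrier G"
  shows "mon_eval G s (u @ v) = mon_eval G s u \<otimes> mon_eval G s v"
  using assms
proof (induction u)
  case Nil
  then show ?case
    using mon_eval_closed[of s v] by (simp add: mon_eval_def)
next
  case (Cons x u)
  then show ?case
    using mon_eval_closed[of s u] mon_eval_closed[of s v] by (simp add: mon_eval_def m_assoc)
qed

lemma sg_eval_snoc: "w \<noteq> [] \<Longrightarrow> sg_eval S t (w @ [y]) = sg_eval S t w \<otimes>\<^bsub>S\<^esub> t y"
  by (cases w) (simp_all add: sg_eval_def)

lemma (in cs_semigroup) sg_eval_closed:
  "t ` set w \<subseteq> carrier S \<Longrightarrow> w \<noteq> [] \<Longrightarrow> sg_eval S t w \<in> carrier S"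
proof (induction w rule: rev_induct)
  case (snoc y w)
  then show ?case
    by (cases "w = []") (simp_all add: sg_eval_def sg_eval_snoc)
qed simp

lemma (in cs_semigroup) green_L_generator:
  assumes "sg_gen_choice S Y t" and x: "x \<in> carrier S"
  shows "\<exists>y\<in>Y. green_L x (t y)"
proof -
  obtain w where w: "w \<in> lists Y" "w \<noteq> []" "sg_eval S t w = x"
    using assms unfolding sg_gen_choice_def by blast
  then obtain v y where vy: "w = v @ [y]"
    by (metis rev_exhaust)
  have tY: "t ` set v \<subseteq> carrier S" "y \<in> Y" "t y \<in> carrier S"
    using assms(1) w(1) vy unfolding sg_gen_choice_def by auto
  show ?thesis
  proof (cases "v = []")
    case True
    then have "x = t y" using w(3) vy by (simp add: sg_eval_def)
    then show ?thesis using tY green_L_refl by blast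
  next
    case False
    then have "x = sg_eval S t v \<otimes> t y" using w(3) vy by (simp add: sg_eval_snoc)
    then show ?thesis using tY green_L_mult[of "sg_eval S t v" "t y"] sg_eval_closed[OF tY(1) False] by auto
  qed
qed

lemma kleene_Nil: "[] \<in> kleene K"
  unfolding kleene_def by (auto intro: exI[of _ "[]"])

lemma kleene_append:
  assumes "v \<in> K" "w \<in> kleene K" shows "v @ w \<in> kleene K"
proof -
  obtain ws where "w = concat ws" "set ws \<subseteq> K"
    using assms(2) unfolding kleene_def by blast
  then have "v @ w = concat (v # ws)" "set (v # ws) \<subseteq> K"
    using assms(1) by auto
  then show ?thesis
    unfolding kleene_def by blast
qed

lemma kleene_least:
  assumes "[] \<in> A" and "\<And>v w. v \<in> K \<Longrightarrow> w \<in> A \<Longrightarrow> v @ w \<in> A"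
  shows "kleene K \<subseteq> A"
proof
  fix w assume "w \<in> kleene K"
  then obtain ws where "w = concat ws" "set ws \<subseteq> K" unfolding kleene_def by blast
  then show "w \<in> A"
    by (induction ws arbitrary: w) (auto intro: assms)
qed

lemma loop_path_append:
  "loop_path M mul Y gen a w b \<Longrightarrow> loop_path M mul Y gen b w' c \<Longrightarrow> loop_path M mul Y gen a (w @ w') c"
  by (induction rule: loop_path.induct) (auto intro: loop_path.intros)

section \<open>The transducer\<close>

text \<open>The initial state is \<open>n\<close>, the final state \<open>Suc n\<close>. Reading a primitive loop that starts
  with the letter \<open>y0\<close>, the transducer is in state \<open>f (y0, y)\<close> when the loop is at an element
  \<open>x \<in> H_class (t y0) (t y)\<close> and the input read so far evaluates to the coordinate
  \<open>phi (e \<otimes> x \<otimes> e)\<close> of \<open>x\<close>.\<close>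

locale loop_transducer = cs_semigroup S e + G: group G
  for S :: "('s, 'e) monoid_scheme" (structure) and e :: 's and G :: "('g, 'b) monoid_scheme" +
  fixes X :: "'x set" and sg :: "'x \<Rightarrow> 'g" and Y :: "'y set" and t :: "'y \<Rightarrow> 's"
    and phi :: "'s \<Rightarrow> 'g" and f :: "'y \<times> 'y \<Rightarrow> nat" and n :: nat
  assumes mon_gen: "mon_gen_choice G X sg"
    and sg_gen: "sg_gen_choice S Y t"
    and phi_iso: "phi \<in> iso (sub_struct S H_e e) G"
    and f_inj: "inj_on f (Y \<times> Y)"
    and f_bound: "f ` (Y \<times> Y) \<subseteq> {..<n}"
begin

sublocale phi: group_hom "sub_struct S H_e e" G phi
  using phi_iso by unfold_locales (simp add: iso_def)

lemma phi_closed [simp]: "h \<in> H_e \<Longrightarrow> phi h \<in> carrier G"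
  and phi_mult [simp]: "h \<in> H_e \<Longrightarrow> k \<in> H_e \<Longrightarrow> phi (h \<otimes> k) = phi h \<otimes>\<^bsub>G\<^esub> phi k"
  and phi_inv [simp]: "h \<in> H_e \<Longrightarrow> phi (inv_e h) = inv\<^bsub>G\<^esub> phi h"
  using phi.hom_closed phi.hom_mult phi.hom_inv by simp_all

lemma phi_inj: "inj_on phi H_e"
  using phi_iso by (simp add: iso_def bij_betw_def)

lemma t_closed [simp]: "y \<in> Y \<Longrightarrow> t y \<in> carrier S"
  and finite_Y: "finite Y"
  using sg_gen unfolding sg_gen_choice_def by auto

lemma f_less: "y0 \<in> Y \<Longrightarrow> y \<in> Y \<Longrightarrow> f (y0, y) < n"
  using f_bound by blast

lemma f_ne [simp]:
  assumes "y0 \<in> Y" "y \<in> Y"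
  shows "f (y0, y) \<noteq> n" "n \<noteq> f (y0, y)" "f (y0, y) \<noteq> Suc n" "Suc n \<noteq> f (y0, y)"
  using f_less[OF assms] by simp_all

lemma f_eq_iff:
  "y0 \<in> Y \<Longrightarrow> y \<in> Y \<Longrightarrow> y0' \<in> Y \<Longrightarrow> y' \<in> Y \<Longrightarrow> f (y0, y) = f (y0', y') \<longleftrightarrow> y0 = y0' \<and> y = y'"
  using f_inj unfolding inj_on_def by blast

abbreviation eval :: "'x list \<Rightarrow> 'g" where
  "eval \<equiv> mon_eval G sg"

lemma eval_closed [simp]: "u \<in> lists X \<Longrightarrow> eval u \<in> carrier G"
  using mon_gen G.mon_eval_closed unfolding mon_gen_choice_def by (metis image_subset_iff in_listsD)

lemma eval_append: "u \<in> lists X \<Longrightarrow> u' \<in> lists X \<Longrightarrow> eval (u @ u') = eval u \<otimes>\<^bsub>G\<^esub> eval u'"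
  using mon_gen G.mon_eval_append unfolding mon_gen_choice_def by (metis image_subset_iff in_listsD)

definition word_of :: "'s \<Rightarrow> 'x list" where
  "word_of h = (SOME u. u \<in> lists X \<and> eval u = phi h)"

lemma word_of:
  assumes "h \<in> H_e" shows "word_of h \<in> lists X \<and> eval (word_of h) = phi h"
proof -
  have "\<exists>u. u \<in> lists X \<and> eval u = phi h"
    using mon_gen phi_closed[OF assms] unfolding mon_gen_choice_def by blast
  then show ?thesis
    unfolding word_of_def by (rule someI_ex)
qed

lemma word_of_lists [simp]: "h \<in> H_e \<Longrightarrow> word_of h \<in> lists X"
  and eval_word_of [simp]: "h \<in> H_e \<Longrightarrow> eval (word_of h) = phi h"
  using word_of by simp_all

definition start_edges :: "(nat \<times> 'x list \<times> 'y hat list \<times> nat) set" where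
  "start_edges = {(n, word_of (e \<otimes> t y \<otimes> e), [Pos y], f (y, y)) | y. y \<in> Y}"

definition pos_edges :: "(nat \<times> 'x list \<times> 'y hat list \<times> nat) set" where
  "pos_edges = {(f (y0, y), word_of (sandwich_shift (t y) (t y1)), [Pos y1], f (y0, y1)) | y0 y y1.
     y0 \<in> Y \<and> y \<in> Y \<and> y1 \<in> Y}"

definition bar_edges :: "(nat \<times> 'x list \<times> 'y hat list \<times> nat) set" where
  "bar_edges = {(f (y0, y), word_of (inv_e (sandwich_shift (t y') (t y1))), [Bar y1], f (y0, y')) | y0 y y' y1.
     y0 \<in> Y \<and> y \<in> Y \<and> y' \<in> Y \<and> y1 \<in> Y \<and> green_L (t y) (t y1)}"

definition stop_edges :: "(nat \<times> 'x list \<times> 'y hat list \<times> nat) set" where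
  "stop_edges = {(f (y0, y), word_of (inv_e (e \<otimes> t y1 \<otimes> e)), [Bar y1], Suc n) | y0 y y1.
     y0 \<in> Y \<and> y \<in> Y \<and> y1 \<in> Y \<and> green_L (t y) (t y1) \<and> green_R (t y1) (t y0)}"

definition edges :: "(nat \<times> 'x list \<times> 'y hat list \<times> nat) set" where
  "edges = start_edges \<union> pos_edges \<union> bar_edges \<union> stop_edges"

lemma finite_edges: "finite edges"
proof -
  have "start_edges \<subseteq> (\<lambda>y. (n, word_of (e \<otimes> t y \<otimes> e), [Pos y], f (y, y))) ` Y"
    and "pos_edges \<subseteq> (\<lambda>(y0, y, y1). (f (y0, y), word_of (sandwich_shift (t y) (t y1)), [Pos y1], f (y0, y1)))
      ` (Y \<times> Y \<times> Y)"
    and "bar_edges \<subseteq> (\<lambda>(y0, y, y', y1). (f (y0, y), word_of (inv_e (sandwich_shift (t y') (t y1))), [Bar y1],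
      f (y0, y'))) ` (Y \<times> Y \<times> Y \<times> Y)"
    and "stop_edges \<subseteq> (\<lambda>(y0, y, y1). (f (y0, y), word_of (inv_e (e \<otimes> t y1 \<otimes> e)), [Bar y1], Suc n))
      ` (Y \<times> Y \<times> Y)"
    unfolding start_edges_def pos_edges_def bar_edges_def stop_edges_def by force+
  then show ?thesis
    unfolding edges_def using finite_Y by (meson finite_SigmaI finite_Un finite_imageI finite_subset)
qed

lemma edgesD:
  assumes "(p, u, v, q) \<in> edges"
  shows "p < Suc n \<and> q \<le> Suc n \<and> u \<in> lists X \<and> v \<in> lists (hat_alph Y)"
proof -
  have [simp]: "y0 \<in> Y \<Longrightarrow> y \<in> Y \<Longrightarrow> f (y0, y) < Suc n" for y0 y
    using f_less less_SucI by blast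
  have [simp]: "y \<in> Y \<Longrightarrow> Pos y \<in> hat_alph Y \<and> Bar y \<in> hat_alph Y" for y
    unfolding hat_alph_def by blast
  have [dest]: "x \<in> set (word_of h) \<Longrightarrow> h \<in> H_e \<Longrightarrow> x \<in> X" for x h
    using word_of_lists by blast
  show ?thesis
    using assms unfolding edges_def start_edges_def pos_edges_def bar_edges_def stop_edges_def
    by (auto intro: less_imp_le_nat)
qed

definition rho :: "('x list \<times> 'y hat list) set" where
  "rho = {(u, v). trans_run edges n u v (Suc n)}"

lemma rational_transduction_rho: "rational_transduction X (hat_alph Y) rho"
proof -
  have "finite {..Suc n} \<and> finite edges \<and> n \<in> {..Suc n} \<and> {Suc n} \<subseteq> {..Suc n} \<and>
    (\<forall>(p, u, v, q) \<in> edges. p \<in> {..Suc n} \<and> q \<in> {..Suc n} \<and> u \<in> lists X \<and> v \<in> lists (hat_alph Y)) \<and>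
    rho = {(u, v). \<exists>q\<in>{Suc n}. trans_run edges n u v q}"
    using finite_edges edgesD unfolding rho_def by fastforce
  then show ?thesis
    unfolding rational_transduction_def by (intro exI)
qed

lemma run_lists: "trans_run edges p u v q \<Longrightarrow> u \<in> lists X"
  by (induction rule: trans_run.induct) (auto dest: edgesD)

lemma run_from_final: "trans_run edges (Suc n) u v q \<Longrightarrow> u = [] \<and> v = []"
  by (erule trans_run.cases) (auto dest: edgesD)

lemma start_edge_cases:
  assumes "(n, u, v, q) \<in> edges"
  obtains y where "y \<in> Y" "u = word_of (e \<otimes> t y \<otimes> e)" "v = [Pos y]" "q = f (y, y)"
  using assms unfolding edges_def start_edges_def pos_edges_def bar_edges_def stop_edges_def
  by auto

abbreviation coord :: "'s \<Rightarrow> 'g" where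
  "coord x \<equiv> phi (e \<otimes> x \<otimes> e)"

lemma coord_mult_eval_append:
  "x \<in> carrier S \<Longrightarrow> u \<in> lists X \<Longrightarrow> u' \<in> lists X \<Longrightarrow>
    coord x \<otimes>\<^bsub>G\<^esub> eval (u @ u') = (coord x \<otimes>\<^bsub>G\<^esub> eval u) \<otimes>\<^bsub>G\<^esub> eval u'"
  by (simp add: eval_append G.m_assoc)

abbreviation path :: "'s option \<Rightarrow> 'y hat list \<Rightarrow> 's option \<Rightarrow> bool" where
  "path a w b \<equiv> loop_path (carrier1 S) (mult1 S) Y (\<lambda>y. Some (t y)) a w b"

lemma None_in_carrier1 [simp]: "None \<in> carrier1 S"
  and Some_in_carrier1 [simp]: "Some x \<in> carrier1 S \<longleftrightarrow> x \<in> carrier S"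
  unfolding carrier1_def by auto

lemma path_Pos: "x \<in> carrier S \<Longrightarrow> y \<in> Y \<Longrightarrow> path (Some (x \<otimes> t y)) w None \<Longrightarrow> path (Some x) (Pos y # w) None"
  using lp_pos[of "Some x" "carrier1 S" y Y "mult1 S" "\<lambda>y. Some (t y)"] by simp

lemma path_Bar: "x \<in> carrier S \<Longrightarrow> y \<in> Y \<Longrightarrow> path (Some x) w None \<Longrightarrow> path (Some (x \<otimes> t y)) (Bar y # w) None"
  using lp_bar[of "Some x" "carrier1 S" y Y "mult1 S" "\<lambda>y. Some (t y)"] by simp

lemma path_start: "y \<in> Y \<Longrightarrow> path (Some (t y)) w None \<Longrightarrow> path None (Pos y # w) None"
  using lp_pos[of None "carrier1 S" y Y "mult1 S" "\<lambda>y. Some (t y)"] by simp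

lemma path_stop: "y \<in> Y \<Longrightarrow> path (Some (t y)) [Bar y] None"
  using lp_bar[OF None_in_carrier1 _ lp_nil[OF None_in_carrier1], of y Y "mult1 S" "\<lambda>y. Some (t y)"] by simp

lemma inner_edge_sound:
  assumes edge: "(f (y0, y), u, v, q) \<in> edges" and "q \<noteq> Suc n"
    and y0: "y0 \<in> Y" and y: "y \<in> Y" and x: "x \<in> H_class (t y0) (t y)"
  obtains y' x' where "y' \<in> Y" "q = f (y0, y')" "x' \<in> H_class (t y0) (t y')"
    "coord x' = coord x \<otimes>\<^bsub>G\<^esub> eval u"
    "\<And>w. path (Some x') w None \<Longrightarrow> path (Some x) (v @ w) None"
proof -
  have xC: "x \<in> carrier S" and xL: "green_L x (t y)"
    using H_classD[OF x] by auto
  have "(f (y0, y), u, v, q) \<in> pos_edges \<union> bar_edges"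
    using edge \<open>q \<noteq> Suc n\<close> y0 y unfolding edges_def start_edges_def stop_edges_def by auto
  then consider
      (pos) y1 where "y1 \<in> Y" "u = word_of (sandwich_shift (t y) (t y1))" "v = [Pos y1]" "q = f (y0, y1)"
    | (bar) y' y1 where "y' \<in> Y" "y1 \<in> Y" "green_L (t y) (t y1)"
        "u = word_of (inv_e (sandwich_shift (t y') (t y1)))" "v = [Bar y1]" "q = f (y0, y')"
    using y0 y unfolding pos_edges_def bar_edges_def by (auto simp: f_eq_iff)
  then show ?thesis
  proof cases
    case pos
    show ?thesis
    proof (rule that[of y1 "x \<otimes> t y1"])
      show "x \<otimes> t y1 \<in> H_class (t y0) (t y1)"
        using H_class_mult[OF _ x] y0 pos(1) by simp
      show "coord (x \<otimes> t y1) = coord x \<otimes>\<^bsub>G\<^esub> eval u"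
        using sandwich_mult[OF xC _ _ xL] xC y pos by simp
      show "path (Some x) (v @ w) None" if "path (Some (x \<otimes> t y1)) w None" for w
        using path_Pos[OF xC pos(1) that] pos(3) by simp
    qed (use pos in auto)
  next
    case bar
    obtain x' where x': "x' \<in> H_class (t y0) (t y')" "x' \<otimes> t y1 = x"
      "e \<otimes> x' \<otimes> e = e \<otimes> x \<otimes> e \<otimes> inv_e (sandwich_shift (t y') (t y1))"
      using right_quotient_in_H_class[OF _ _ _ bar(3) x, of "t y'"] y0 bar(1,2) by auto
    show ?thesis
    proof (rule that[of y' x'])
      show "coord x' = coord x \<otimes>\<^bsub>G\<^esub> eval u"
        using xC x'(3) bar(1,2,4) by simp
      show "path (Some x) (v @ w) None" if "path (Some x') w None" for w
        using path_Bar[OF H_classD(1)[OF x'(1)] bar(2) that] bar(5) x'(2) by simp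
    qed (use bar x' in auto)
  qed
qed

lemma stop_edge_sound:
  assumes edge: "(f (y0, y), u, v, Suc n) \<in> edges"
    and y0: "y0 \<in> Y" and y: "y \<in> Y" and x: "x \<in> H_class (t y0) (t y)"
    and accept: "coord x \<otimes>\<^bsub>G\<^esub> eval u = \<one>\<^bsub>G\<^esub>"
  shows "path (Some x) v None"
proof -
  have xC: "x \<in> carrier S" using H_classD[OF x] by simp
  have "(f (y0, y), u, v, Suc n) \<in> stop_edges"
    using edge y0 y unfolding edges_def start_edges_def pos_edges_def bar_edges_def by auto
  then obtain y1 where y1: "y1 \<in> Y" "green_L (t y) (t y1)" "green_R (t y1) (t y0)"
    and uv: "u = word_of (inv_e (e \<otimes> t y1 \<otimes> e))" "v = [Bar y1]"
    using y0 y unfolding stop_edges_def by (auto simp: f_eq_iff)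
  have "inv\<^bsub>G\<^esub> (inv\<^bsub>G\<^esub> coord (t y1)) = coord x"
    using accept uv(1) y1(1) xC by (intro G.inv_equality) simp_all
  then have "e \<otimes> t y1 \<otimes> e = e \<otimes> x \<otimes> e"
    using phi_inj y1(1) xC by (simp add: inj_on_def)
  moreover have "t y1 \<in> H_class (t y0) (t y1)"
    using y1 y0 unfolding H_class_def by (simp add: green_L_refl)
  moreover have "x \<in> H_class (t y0) (t y1)"
    using H_class_green_L[OF _ y1(2) x] y1(1) by simp
  ultimately have "t y1 = x"
    using sandwich_inj_on_H_class[of "t y0" "t y1" "t y1" x] y0 y1(1) by simp
  then show ?thesis
    using path_stop[OF y1(1)] uv(2) by simp
qed

lemma run_sound:
  assumes "trans_run edges p u v (Suc n)" "p = f (y0, y)" "y0 \<in> Y" "y \<in> Y"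
    and "x \<in> H_class (t y0) (t y)" "coord x \<otimes>\<^bsub>G\<^esub> eval u = \<one>\<^bsub>G\<^esub>"
  shows "path (Some x) v None"
  using assms
proof (induction p u v "Suc n" arbitrary: y0 y x rule: trans_run.induct)
  case tr_nil
  then show ?case by simp
next
  case (tr_step p u1 v1 q u' v')
  have xC: "x \<in> carrier S" using H_classD[OF tr_step.prems(4)] by simp
  have lists: "u1 \<in> lists X" "u' \<in> lists X"
    using edgesD[OF tr_step.hyps(1)] run_lists[OF tr_step.hyps(2)] by auto
  show ?case
  proof (cases "q = Suc n")
    case True
    then have "u' = [] \<and> v' = []" using run_from_final tr_step.hyps(2) by simp
    then show ?thesis
      using stop_edge_sound[of y0 y u1 v1 x] tr_step True by simp
  next
    case False
    obtain y' x' where y': "y' \<in> Y" "q = f (y0, y')" "x' \<in> H_class (t y0) (t y')"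
      and coord: "coord x' = coord x \<otimes>\<^bsub>G\<^esub> eval u1"
      and extend: "\<And>w. path (Some x') w None \<Longrightarrow> path (Some x) (v1 @ w) None"
      using inner_edge_sound[of y0 y u1 v1 q x] tr_step False by auto
    have "coord x' \<otimes>\<^bsub>G\<^esub> eval u' = \<one>\<^bsub>G\<^esub>"
      using tr_step.prems(5) coord_mult_eval_append[OF xC lists] coord by simp
    then show ?thesis
      using extend tr_step.hyps(3)[OF y'(2) tr_step.prems(2) y'(1,3)] by blast
  qed
qed

lemma primitive_loop_sound:
  assumes "(u, v) \<in> rho" and u: "u \<in> word_problem G X sg"
  shows "path None v None"
proof -
  have "trans_run edges n u v (Suc n)"
    using assms(1) unfolding rho_def by simp
  then obtain u1 v1 q u' v' where edge: "(n, u1, v1, q) \<in> edges"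
    and run: "trans_run edges q u' v' (Suc n)" and uv: "u = u1 @ u'" "v = v1 @ v'"
    by (auto elim: trans_run.cases)
  obtain y where y: "y \<in> Y" "u1 = word_of (e \<otimes> t y \<otimes> e)" "v1 = [Pos y]" "q = f (y, y)"
    using start_edge_cases[OF edge] .
  have "coord (t y) \<otimes>\<^bsub>G\<^esub> eval u' = eval u"
    using y run_lists[OF run] by (simp add: uv(1) eval_append)
  also have "\<dots> = \<one>\<^bsub>G\<^esub>"
    using u unfolding word_problem_def by simp
  finally have "path (Some (t y)) v' None"
    using run_sound[OF run y(4) y(1) y(1) H_class_refl] y(1) by simp
  then show ?thesis
    using path_start y(1,3) uv(2) by simp
qed

abbreviation primitive_loops :: "'y hat list set" where
  "primitive_loops \<equiv> rel_image (word_problem G X sg) rho"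

definition finishes :: "'y \<Rightarrow> 'y \<Rightarrow> 's \<Rightarrow> 'y hat list \<Rightarrow> bool" where
  "finishes y0 y x w \<longleftrightarrow> (\<exists>u w1 w2. w = w1 @ w2 \<and> trans_run edges (f (y0, y)) u w1 (Suc n) \<and>
     coord x \<otimes>\<^bsub>G\<^esub> eval u = \<one>\<^bsub>G\<^esub> \<and> w2 \<in> kleene primitive_loops)"

lemma finishes_edge:
  assumes edge: "(f (y0, y), u0, v0, f (y0, y')) \<in> edges" and x: "x \<in> carrier S"
    and coord: "coord x' = coord x \<otimes>\<^bsub>G\<^esub> eval u0" and "finishes y0 y' x' w"
  shows "finishes y0 y x (v0 @ w)"
proof -
  obtain u w1 w2 where w: "w = w1 @ w2" and run: "trans_run edges (f (y0, y')) u w1 (Suc n)"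
    and accept: "coord x' \<otimes>\<^bsub>G\<^esub> eval u = \<one>\<^bsub>G\<^esub>" and w2: "w2 \<in> kleene primitive_loops"
    using \<open>finishes y0 y' x' w\<close> unfolding finishes_def by blast
  have "trans_run edges (f (y0, y)) (u0 @ u) (v0 @ w1) (Suc n)"
    using edge run by (rule tr_step)
  moreover have "coord x \<otimes>\<^bsub>G\<^esub> eval (u0 @ u) = \<one>\<^bsub>G\<^esub>"
    using coord_mult_eval_append[OF x _ run_lists[OF run], of u0] edgesD[OF edge] accept coord by simp
  ultimately show ?thesis
    unfolding finishes_def using w w2 by (intro exI[of _ "u0 @ u"] exI[of _ "v0 @ w1"] exI[of _ w2]) simp
qed

lemma finishes_start:
  assumes y: "y \<in> Y" and "finishes y y (t y) w"
  shows "Pos y # w \<in> kleene primitive_loops"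
proof -
  obtain u w1 w2 where w: "w = w1 @ w2" and run: "trans_run edges (f (y, y)) u w1 (Suc n)"
    and accept: "coord (t y) \<otimes>\<^bsub>G\<^esub> eval u = \<one>\<^bsub>G\<^esub>" and w2: "w2 \<in> kleene primitive_loops"
    using \<open>finishes y y (t y) w\<close> unfolding finishes_def by blast
  define u0 where "u0 = word_of (e \<otimes> t y \<otimes> e)"
  have "(n, u0, [Pos y], f (y, y)) \<in> edges"
    using y unfolding edges_def start_edges_def u0_def by blast
  then have "trans_run edges n (u0 @ u) ([Pos y] @ w1) (Suc n)"
    using run by (rule tr_step)
  then have "(u0 @ u, [Pos y] @ w1) \<in> rho"
    unfolding rho_def by simp
  moreover have "u0 @ u \<in> word_problem G X sg"
    using y accept run_lists[OF run] unfolding word_problem_def u0_def by (simp add: eval_append)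
  ultimately have "Pos y # w1 \<in> primitive_loops"
    unfolding rel_image_def by auto
  then show ?thesis
    using kleene_append[OF _ w2] w by fastforce
qed

lemma finishes_Pos:
  assumes y0: "y0 \<in> Y" and yc: "yc \<in> Y" and y: "y \<in> Y" and x: "x \<in> H_class (t y0) (t yc)"
    and "finishes y0 y (x \<otimes> t y) w"
  shows "finishes y0 yc x (Pos y # w)"
proof -
  have "(f (y0, yc), word_of (sandwich_shift (t yc) (t y)), [Pos y], f (y0, y)) \<in> edges"
    using y0 yc y unfolding edges_def pos_edges_def by blast
  moreover have "coord (x \<otimes> t y) = coord x \<otimes>\<^bsub>G\<^esub> eval (word_of (sandwich_shift (t yc) (t y)))"
    using sandwich_mult[of x "t yc" "t y"] H_classD[OF x] yc y by simp
  ultimately show ?thesis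
    using finishes_edge[of y0 yc _ "[Pos y]" y x "x \<otimes> t y" w] H_classD(1)[OF x]
      \<open>finishes y0 y (x \<otimes> t y) w\<close> by simp
qed

lemma finishes_Bar:
  assumes y0: "y0 \<in> Y" and yc: "yc \<in> Y" and y: "y \<in> Y"
    and x2: "x2 \<in> carrier S" and x: "x2 \<otimes> t y \<in> H_class (t y0) (t yc)"
    and finishes: "\<And>y'. y' \<in> Y \<Longrightarrow> x2 \<in> H_class (t y0) (t y') \<Longrightarrow> finishes y0 y' x2 w"
  shows "finishes y0 yc (x2 \<otimes> t y) (Bar y # w)"
proof -
  obtain y' where y': "y' \<in> Y" "green_L x2 (t y')"
    using green_L_generator[OF sg_gen x2] by blast
  have "green_R x2 (x2 \<otimes> t y)"
    using green_R_sym[OF _ x2 green_R_mult] x2 y by simp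
  then have "green_R x2 (t y0)"
    using green_R_trans[OF _ _ H_classD(2)[OF x]] y0 by simp
  then have x2H: "x2 \<in> H_class (t y0) (t y')"
    unfolding H_class_def using x2 y'(2) by simp
  have "green_L (t yc) (x2 \<otimes> t y)"
    using green_L_sym[OF _ _ H_classD(3)[OF x]] x2 yc y by simp
  then have "green_L (t yc) (t y)"
    using green_L_trans[OF _ _ green_L_mult[OF x2]] y by simp
  define c where "c = sandwich_shift (t y') (t y)"
  have c: "c \<in> H_e" using y y'(1) by (simp add: c_def)
  have "(f (y0, yc), word_of (inv_e c), [Bar y], f (y0, y')) \<in> edges"
    using y0 yc y y'(1) \<open>green_L (t yc) (t y)\<close> unfolding edges_def bar_edges_def c_def by blast
  moreover have "coord x2 = coord (x2 \<otimes> t y) \<otimes>\<^bsub>G\<^esub> eval (word_of (inv_e c))"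
    using sandwich_mult[OF x2 _ _ y'(2)] x2 y y'(1) by (simp add: c_def G.m_assoc)
  ultimately show ?thesis
    using finishes_edge[of y0 yc _ "[Bar y]" y' "x2 \<otimes> t y" x2 w] finishes[OF y'(1) x2H]
      H_classD(1)[OF x] by simp
qed

lemma finishes_stop:
  assumes y0: "y0 \<in> Y" and yc: "yc \<in> Y" and y: "y \<in> Y" and ty: "t y \<in> H_class (t y0) (t yc)"
    and w: "w \<in> kleene primitive_loops"
  shows "finishes y0 yc (t y) (Bar y # w)"
proof -
  define u where "u = word_of (inv_e (e \<otimes> t y \<otimes> e))"
  have "green_L (t yc) (t y)"
    using green_L_sym[OF _ _ H_classD(3)[OF ty]] yc y by simp
  then have "(f (y0, yc), u, [Bar y], Suc n) \<in> edges"
    using y0 yc y H_classD(2)[OF ty] unfolding edges_def stop_edges_def u_def by blast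
  then have "trans_run edges (f (y0, yc)) (u @ []) ([Bar y] @ []) (Suc n)"
    using tr_nil by (rule tr_step)
  moreover have "coord (t y) \<otimes>\<^bsub>G\<^esub> eval u = \<one>\<^bsub>G\<^esub>"
    using y by (simp add: u_def)
  ultimately show ?thesis
    unfolding finishes_def using w by (intro exI[of _ u] exI[of _ "[Bar y]"] exI[of _ w]) simp
qed

lemma path_complete:
  "path a w b \<Longrightarrow> b = None \<Longrightarrow> (a = None \<longrightarrow> w \<in> kleene primitive_loops) \<and>
    (\<forall>x y0 y. a = Some x \<longrightarrow> y0 \<in> Y \<longrightarrow> y \<in> Y \<longrightarrow> x \<in> H_class (t y0) (t y) \<longrightarrow> finishes y0 y x w)"
proof (induction rule: loop_path.induct)
  case (lp_nil a)
  then show ?case by (simp add: kleene_Nil)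
next
  case (lp_pos a y w b)
  note IH = lp_pos.IH[OF lp_pos.prems]
  show ?case
  proof (intro conjI allI impI)
    assume "a = None"
    then show "Pos y # w \<in> kleene primitive_loops"
      using IH finishes_start lp_pos.hyps(2) H_class_refl by simp
  next
    fix x y0 yc assume "a = Some x" "y0 \<in> Y" "yc \<in> Y" "x \<in> H_class (t y0) (t yc)"
    then show "finishes y0 yc x (Pos y # w)"
      using IH finishes_Pos lp_pos.hyps(2) H_class_mult by simp
  qed
next
  case (lp_bar a y w b)
  note IH = lp_bar.IH[OF lp_bar.prems]
  show ?case
  proof (intro conjI allI impI)
    assume "mult1 S a (Some (t y)) = None"
    then show "Bar y # w \<in> kleene primitive_loops"
      by (cases a) simp_all
  next
    fix x y0 yc assume "mult1 S a (Some (t y)) = Some x" "y0 \<in> Y" "yc \<in> Y"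
      and x: "x \<in> H_class (t y0) (t yc)"
    then show "finishes y0 yc x (Bar y # w)"
      using IH finishes_stop finishes_Bar lp_bar.hyps(1,2) by (cases a) auto
  qed
qed

lemma L_tau_eq_kleene: "L_tau S Y t = kleene primitive_loops"
proof
  show "L_tau S Y t \<subseteq> kleene primitive_loops"
    using path_complete unfolding L_tau_def loop_problem_def by blast
  show "kleene primitive_loops \<subseteq> L_tau S Y t"
    unfolding L_tau_def loop_problem_def
  proof (rule kleene_least)
    show "[] \<in> {w. path None w None}"
      by (simp add: lp_nil)
    show "v @ w \<in> {w. path None w None}" if "v \<in> primitive_loops" "w \<in> {w. path None w None}" for v w
      using that primitive_loop_sound loop_path_append unfolding rel_image_def by fastforce
  qed
qed

end

theorem theorem5p5:
  fixes S :: "('s, 'e) monoid_scheme" and G :: "('g, 'b) monoid_scheme"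
    and Y :: "'y set" and t :: "'y \<Rightarrow> 's"
    and X :: "'x set" and s :: "'x \<Rightarrow> 'g"
  assumes "completely_simple S"
    and "finitely_generated_sg S"
    and "group G"
    and "\<forall>H. maximal_subgroup S H \<longrightarrow>
           (\<exists>e. group (sub_struct S H e) \<and> sub_struct S H e \<cong> G)"
    and "sg_gen_choice S Y t"
    and "mon_gen_choice G X s"
  shows "\<exists>\<rho>. rational_transduction X (hat_alph Y) \<rho> \<and>
           L_tau S Y t = kleene (rel_image (word_problem G X s) \<rho>)"
proof -
  obtain e where "cs_semigroup S e"
    using completely_simple_imp_cs_semigroup[OF assms(1)] .
  then interpret cs_semigroup S e .
  obtain e' where "sub_struct S H_e e' \<cong> G"
    using assms(4) maximal_subgroup_H_e by blast
  \<comment> \<open>Isomorphisms do not see the \<open>one\<close> field, so \<open>e'\<close> may be replaced by \<open>e\<close>.\<close>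
  then obtain phi where "phi \<in> iso (sub_struct S H_e e) G"
    unfolding is_iso_def by (auto simp: iso_def hom_def)
  moreover obtain f and n :: nat where "inj_on f (Y \<times> Y)" "f ` (Y \<times> Y) = {..<n}"
    using finite_imp_inj_to_nat_seg[of "Y \<times> Y"] assms(5) unfolding sg_gen_choice_def by auto
  ultimately interpret loop_transducer S e G X s Y t phi f n
    using assms(3,5,6) cs_semigroup_axioms
    by (intro loop_transducer.intro loop_transducer_axioms.intro) auto
  show ?thesis
    using rational_transduction_rho L_tau_eq_kleene by blast
qed

end
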